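(* Let $(a,b)$ be a bounded interval of $\mathbb R$ and $v\in H^1((a,b))$, identified with its continuous extension to $[a,b]$. Let $v_0=\min_{[a,b]}v$, $v_1=\max_{[a,b]}v$, and $\tilde I=\{s\in[a,b]: v_0<v(s)<v_1\}$. Then $$\int_{\tilde I}\big(v(s)-v_0\big)^2\,ds\le|\tilde I|^2\int_{\tilde I}(v'(s))^2\,ds,$$ where $|\tilde I|$ is the Lebesgue measure of $\tilde I$. *)

theory Defs
  imports "HOL-Analysis.Analysis"
begin

definition test_fun :: "real \<Rightarrow> real \<Rightarrow> (real \<Rightarrow> real) \<Rightarrow> bool" where
  "test_fun a b \<phi> \<longleftrightarrow>
     (\<forall>k x. ((deriv ^^ k) \<phi>) differentiable (at x)) \<and>
     (\<exists>c d. a < c \<and> d < b \<and> (\<forall>x. x \<notin> {c..d} \<longrightarrow> \<phi> x = 0))"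

definition L2_on :: "real set \<Rightarrow> (real \<Rightarrow> real) \<Rightarrow> bool" where
  "L2_on S f \<longleftrightarrow> set_borel_measurable lborel S f \<and>
                   set_integrable lborel S (\<lambda>x. (f x)\<^sup>2)"

definition H1_weak_deriv :: "real \<Rightarrow> real \<Rightarrow> (real \<Rightarrow> real) \<Rightarrow> (real \<Rightarrow> real) \<Rightarrow> bool" where
  "H1_weak_deriv a b v g \<longleftrightarrow>
     L2_on {a<..<b} v \<and> L2_on {a<..<b} g \<and>
     (\<forall>\<phi>. test_fun a b \<phi> \<longrightarrow>
        (LINT x:{a<..<b}|lborel. v x * deriv \<phi> x) = - (LINT x:{a<..<b}|lborel. g x * \<phi> x))"

end

(*
  For s in the band I, start at a minimum point m of v and move towards s.  Let p be the
  last point before s where v = v0 and q the first point after p where v = v1 (or q = s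
  if there is none).  On (p, q) the function v stays strictly between v0 and v1, so
  (p, q) is contained in I, and v s - v0 <= |v q - v p|.  Testing the weak derivative
  against smooth approximations of the indicator of [x, y] shows that v is absolutely
  continuous with |v q - v p| <= integral of |g| over (p, q).  Hence v - v0 <= K on I,
  where K is the integral of |g| over I, and by Cauchy-Schwarz K^2 <= |I| * integral of
  g^2 over I.  Integrating (v - v0)^2 <= K^2 over I gives the claim.
*)
theory Submission
  imports Defs "HOL-Computational_Algebra.Polynomial"
begin

lemma set_integral_vanishing_outside:
  fixes f :: "_ \<Rightarrow> 'b::{banach, second_countable_topology}"
  assumes "B \<subseteq> A" "\<And>t. t \<in> A - B \<Longrightarrow> f t = 0"
  shows "set_integrable M A f \<longleftrightarrow> set_integrable M B f"
    and "(LINT t:A|M. f t) = (LINT t:B|M. f t)"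
proof -
  have "(\<lambda>t. indicator A t *\<^sub>R f t) = (\<lambda>t. indicator B t *\<^sub>R f t)"
    using assms by (auto simp: indicator_def fun_eq_iff)
  then show "set_integrable M A f \<longleftrightarrow> set_integrable M B f"
    and "(LINT t:A|M. f t) = (LINT t:B|M. f t)"
    unfolding set_integrable_def set_lebesgue_integral_def by simp_all
qed

lemma set_integral_mono_set:
  fixes f :: "_ \<Rightarrow> real"
  assumes "set_integrable M B f" "A \<in> sets M" "A \<subseteq> B" "\<And>x. x \<in> B \<Longrightarrow> 0 \<le> f x"
  shows "(LINT x:A|M. f x) \<le> (LINT x:B|M. f x)"
proof -
  have "set_integrable M A f" by (rule set_integrable_subset[OF assms(1-3)])
  with assms show ?thesis
    unfolding set_lebesgue_integral_def set_integrable_def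
    by (intro integral_mono) (auto simp: indicator_def)
qed

lemma square_integrable_imp_set_integrable:
  fixes f :: "_ \<Rightarrow> real"
  assumes "A \<in> sets M" "emeasure M A < \<infinity>" "set_borel_measurable M A f"
    and "set_integrable M A (\<lambda>x. (f x)\<^sup>2)"
  shows "set_integrable M A f"
proof (rule set_integrable_bound[OF _ assms(3)])
  have "set_integrable M A (\<lambda>x. 1 :: real)"
    using assms(1,2) by (simp add: set_integrable_def)
  then show "set_integrable M A (\<lambda>x. 1 + (f x)\<^sup>2)"
    using assms(4) by (rule set_integral_add)
  have "\<bar>f x\<bar> \<le> 1 + (f x)\<^sup>2" for x
    using power2_abs[of "f x"] zero_le_power2[of "\<bar>f x\<bar> - 1"] by (simp add: power2_diff)
  then show "AE x in M. x \<in> A \<longrightarrow> norm (f x) \<le> norm (1 + (f x)\<^sup>2)"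
    by (simp add: add_nonneg_nonneg)
qed

lemma abs_set_integral_mult_le:
  fixes f \<phi> :: "_ \<Rightarrow> real"
  assumes f: "set_integrable M A f" and "\<phi> \<in> borel_measurable M" and "\<And>x. \<bar>\<phi> x\<bar> \<le> 1"
  shows "\<bar>LINT x:A|M. f x * \<phi> x\<bar> \<le> (LINT x:A|M. \<bar>f x\<bar>)"
proof -
  have bound: "\<bar>f x * \<phi> x\<bar> \<le> \<bar>f x\<bar>" for x
    using assms(3)[of x] by (simp add: abs_mult mult_left_le)
  have "set_borel_measurable M A f"
    using f unfolding set_integrable_def set_borel_measurable_def
    by (rule borel_measurable_integrable)
  then have "set_borel_measurable M A (\<lambda>x. f x * \<phi> x)"
    using assms(2) unfolding set_borel_measurable_def by (simp add: mult.assoc[symmetric])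
  with f bound have int: "set_integrable M A (\<lambda>x. f x * \<phi> x)"
    by (intro set_integrable_bound[OF f]) auto
  have "\<bar>LINT x:A|M. f x * \<phi> x\<bar> \<le> (LINT x:A|M. \<bar>f x * \<phi> x\<bar>)"
    using set_integral_norm_bound[OF int] by simp
  also have "\<dots> \<le> (LINT x:A|M. \<bar>f x\<bar>)"
    by (intro set_integral_mono set_integrable_abs int f bound)
  finally show ?thesis .
qed

lemma Cauchy_Schwarz_set_integral:
  fixes f :: "_ \<Rightarrow> real"
  assumes A: "A \<in> sets M" "emeasure M A < \<infinity>"
    and f: "set_integrable M A f" and f2: "set_integrable M A (\<lambda>x. (f x)\<^sup>2)"
  shows "(LINT x:A|M. \<bar>f x\<bar>)\<^sup>2 \<le> measure M A * (LINT x:A|M. (f x)\<^sup>2)"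
proof -
  have nn: "(\<integral>\<^sup>+x. ennreal (indicator A x * h x) \<partial>M) = ennreal (LINT x:A|M. h x)"
    if "set_integrable M A h" "\<And>x. 0 \<le> h x" for h :: "_ \<Rightarrow> real"
  proof -
    have "integrable M (\<lambda>x. indicator A x * h x)"
      using that(1) by (simp add: set_integrable_def)
    then show ?thesis
      using that(2) by (simp add: set_lebesgue_integral_def nn_integral_eq_integral)
  qed
  have meas: "(\<lambda>x. indicator A x * \<bar>f x\<bar>) \<in> borel_measurable M"
    using set_integrable_abs[OF f] unfolding set_integrable_def
    by (simp add: borel_measurable_integrable)
  have "(\<integral>\<^sup>+x. ennreal (indicator A x * \<bar>f x\<bar>) * ennreal (indicator A x) \<partial>M)\<^sup>2
      \<le> (\<integral>\<^sup>+x. ennreal (indicator A x * \<bar>f x\<bar>) ^ 2 \<partial>M) * (\<integral>\<^sup>+x. ennreal (indicator A x) ^ 2 \<partial>M)"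
    using A meas by (intro Cauchy_Schwarz_nn_integral) auto
  also have "(\<lambda>x. ennreal (indicator A x * \<bar>f x\<bar>) * ennreal (indicator A x))
      = (\<lambda>x. ennreal (indicator A x * \<bar>f x\<bar>))"
    by (auto simp: indicator_def fun_eq_iff)
  also have "(\<lambda>x. ennreal (indicator A x * \<bar>f x\<bar>) ^ 2) = (\<lambda>x. ennreal (indicator A x * (f x)\<^sup>2))"
    by (auto simp: indicator_def fun_eq_iff) (metis abs_ge_zero ennreal_power power2_abs)
  also have "(\<lambda>x. ennreal (indicator A x) ^ 2) = (\<lambda>x. indicator A x)"
    by (auto simp: indicator_def fun_eq_iff)
  finally have "ennreal (LINT x:A|M. \<bar>f x\<bar>) ^ 2
      \<le> ennreal (LINT x:A|M. (f x)\<^sup>2) * ennreal (measure M A)"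
    using A emeasure_eq_ennreal_measure[of M A]
    by (simp add: nn[OF set_integrable_abs[OF f] abs_ge_zero] nn[OF f2 zero_le_power2])
  moreover have nonneg: "0 \<le> (LINT x:A|M. \<bar>f x\<bar>)" "0 \<le> (LINT x:A|M. (f x)\<^sup>2)"
    unfolding set_lebesgue_integral_def by (simp_all add: integral_nonneg)
  ultimately have "ennreal ((LINT x:A|M. \<bar>f x\<bar>)\<^sup>2)
      \<le> ennreal ((LINT x:A|M. (f x)\<^sup>2) * measure M A)"
    by (simp add: ennreal_power ennreal_mult)
  then show ?thesis
    using nonneg(2) by (simp add: ennreal_le_iff mult.commute)
qed

section \<open>Smooth functions\<close>

coinductive smooth :: "(real \<Rightarrow> real) \<Rightarrow> bool" where
  smoothI: "(\<And>x. (f has_real_derivative f' x) (at x)) \<Longrightarrow> smooth f' \<Longrightarrow> smooth f"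

lemma smoothE:
  assumes "smooth f"
  obtains f' where "\<And>x. (f has_real_derivative f' x) (at x)" "smooth f'"
  using assms by (cases rule: smooth.cases) blast

lemma smooth_has_real_derivative:
  "smooth f \<Longrightarrow> (f has_real_derivative deriv f x) (at x)"
  by (metis smoothE DERIV_imp_deriv)

lemma smooth_deriv:
  assumes "smooth f"
  shows "smooth (deriv f)"
proof -
  obtain f' where f': "\<And>x. (f has_real_derivative f' x) (at x)" "smooth f'"
    using assms smoothE by blast
  then have "deriv f = f'" by (auto intro!: ext DERIV_imp_deriv)
  with f' show ?thesis by simp
qed

lemma smooth_higher_deriv: "smooth f \<Longrightarrow> smooth ((deriv ^^ k) f)"
  by (induction k) (auto intro: smooth_deriv)

lemma smooth_imp_differentiable: "smooth f \<Longrightarrow> f differentiable (at x)"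
  using smooth_has_real_derivative real_differentiable_def by blast

lemma smooth_imp_continuous_on: "smooth f \<Longrightarrow> continuous_on S f"
  by (meson continuous_at_imp_continuous_on differentiable_imp_continuous_within
      smooth_imp_differentiable)

text \<open>Closure properties are proved by coinduction over the algebra generated by the smooth
  functions together with a set \<open>B\<close> of functions whose derivatives stay in that algebra.\<close>

inductive_set smooth_algebra :: "(real \<Rightarrow> real) set \<Rightarrow> (real \<Rightarrow> real) set" for B where
  base: "f \<in> B \<Longrightarrow> f \<in> smooth_algebra B"
| smooth: "smooth f \<Longrightarrow> f \<in> smooth_algebra B"
| add: "f \<in> smooth_algebra B \<Longrightarrow> g \<in> smooth_algebra B \<Longrightarrow> (\<lambda>x. f x + g x) \<in> smooth_algebra B"
| mult: "f \<in> smooth_algebra B \<Longrightarrow> g \<in> smooth_algebra B \<Longrightarrow> (\<lambda>x. f x * g x) \<in> smooth_algebra B"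

lemma smooth_algebra_has_derivative:
  assumes B: "\<And>f. f \<in> B \<Longrightarrow>
      \<exists>f'. (\<forall>x. (f has_real_derivative f' x) (at x)) \<and> f' \<in> smooth_algebra B"
    and "f \<in> smooth_algebra B"
  shows "\<exists>f'. (\<forall>x. (f has_real_derivative f' x) (at x)) \<and> f' \<in> smooth_algebra B"
  using assms(2)
proof induction
  case (base f)
  then show ?case by (rule B)
next
  case (smooth f)
  then obtain f' where "\<And>x. (f has_real_derivative f' x) (at x)" "smooth f'"
    by (blast elim: smoothE)
  then show ?case by (blast intro: smooth_algebra.smooth)
next
  case (add f g)
  then obtain f' g' where "\<forall>x. (f has_real_derivative f' x) (at x)" "f' \<in> smooth_algebra B"
    "\<forall>x. (g has_real_derivative g' x) (at x)" "g' \<in> smooth_algebra B" by blast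
  then show ?case
    by (intro exI[of _ "\<lambda>x. f' x + g' x"]) (auto intro!: derivative_eq_intros smooth_algebra.add)
next
  case (mult f g)
  then obtain f' g' where "\<forall>x. (f has_real_derivative f' x) (at x)" "f' \<in> smooth_algebra B"
    "\<forall>x. (g has_real_derivative g' x) (at x)" "g' \<in> smooth_algebra B" by blast
  then show ?case
    by (intro exI[of _ "\<lambda>x. f' x * g x + f x * g' x"])
      (auto intro!: derivative_eq_intros smooth_algebra.add smooth_algebra.mult mult.hyps)
qed

lemma smooth_algebra_smooth:
  assumes "\<And>f. f \<in> B \<Longrightarrow>
      \<exists>f'. (\<forall>x. (f has_real_derivative f' x) (at x)) \<and> f' \<in> smooth_algebra B"
    and "f \<in> smooth_algebra B"
  shows "smooth f"
  using assms(2)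
  by (coinduction arbitrary: f rule: smooth.coinduct)
    (use smooth_algebra_has_derivative[OF assms(1)] in blast)

lemma smooth_const: "smooth (\<lambda>x. c)"
  by (coinduction arbitrary: c rule: smooth.coinduct) (auto intro!: exI[of _ "\<lambda>x. 0"])

lemma smooth_add: "smooth f \<Longrightarrow> smooth g \<Longrightarrow> smooth (\<lambda>x. f x + g x)"
  by (rule smooth_algebra_smooth[where B = "{}"]) (auto intro: smooth_algebra.intros)

lemma smooth_mult: "smooth f \<Longrightarrow> smooth g \<Longrightarrow> smooth (\<lambda>x. f x * g x)"
  by (rule smooth_algebra_smooth[where B = "{}"]) (auto intro: smooth_algebra.intros)

lemma smooth_diff: "smooth f \<Longrightarrow> smooth g \<Longrightarrow> smooth (\<lambda>x. f x - g x)"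
  using smooth_add[OF _ smooth_mult[OF smooth_const[of "-1"]], of f g] by simp

lemma smooth_affine: "smooth (\<lambda>x. c * x + d)"
  by (rule smoothI[where f' = "\<lambda>x. c"]) (auto intro!: derivative_eq_intros smooth_const)

lemma smooth_compose:
  assumes "smooth F" "smooth f"
  shows "smooth (\<lambda>x. F (f x))"
proof (rule smooth_algebra_smooth[where B = "{\<lambda>x. G (f x) | G. smooth G}"])
  fix h assume "h \<in> {\<lambda>x. G (f x) | G. smooth G}"
  then obtain G where h: "h = (\<lambda>x. G (f x))" and "smooth G" by blast
  then obtain G' where G': "\<And>y. (G has_real_derivative G' y) (at y)" "smooth G'"
    by (metis smoothE)
  from \<open>smooth f\<close> obtain f' where f': "\<And>x. (f has_real_derivative f' x) (at x)" "smooth f'"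
    by (blast elim: smoothE)
  have "(h has_real_derivative G' (f x) * f' x) (at x)" for x
    unfolding h by (rule DERIV_chain2[OF G'(1) f'(1)])
  moreover have "(\<lambda>x. G' (f x) * f' x) \<in> smooth_algebra {\<lambda>x. G (f x) | G. smooth G}"
    by (rule smooth_algebra.mult[OF smooth_algebra.base smooth_algebra.smooth])
      (use G'(2) f'(2) in auto)
  ultimately show "\<exists>h'. (\<forall>x. (h has_real_derivative h' x) (at x)) \<and>
      h' \<in> smooth_algebra {\<lambda>x. G (f x) | G. smooth G}"
    by (intro exI[of _ "\<lambda>x. G' (f x) * f' x"]) simp
qed (use assms in \<open>blast intro: smooth_algebra.base\<close>)

lemma smooth_inverse:
  assumes "smooth f" and nz: "\<And>x. f x \<noteq> 0"
  shows "smooth (\<lambda>x. inverse (f x))"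
proof (rule smooth_algebra_smooth[where B = "{\<lambda>x. inverse (f x)}"])
  fix h assume "h \<in> {\<lambda>x. inverse (f x)}"
  then have h: "h = (\<lambda>x. inverse (f x))" by simp
  from \<open>smooth f\<close> obtain f' where f': "\<And>x. (f has_real_derivative f' x) (at x)" "smooth f'"
    by (blast elim: smoothE)
  have "(h has_real_derivative (- f' x) * (h x * h x)) (at x)" for x
    unfolding h using f'(1)[of x] nz[of x]
    by (auto intro!: derivative_eq_intros simp: field_simps power2_eq_square)
  moreover have "(\<lambda>x. (- f' x) * (h x * h x)) \<in> smooth_algebra {h}"
    by (rule smooth_algebra.mult[OF smooth_algebra.smooth
          smooth_algebra.mult[OF smooth_algebra.base smooth_algebra.base]])
      (use smooth_mult[OF smooth_const[of "-1"] f'(2)] in auto)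
  ultimately show "\<exists>h'. (\<forall>x. (h has_real_derivative h' x) (at x)) \<and>
      h' \<in> smooth_algebra {\<lambda>x. inverse (f x)}"
    using h by (intro exI[of _ "\<lambda>x. (- f' x) * (h x * h x)"]) simp
qed (simp add: smooth_algebra.base)

section \<open>A smooth step function and smooth plateaus\<close>

text \<open>The functions \<open>P(1/x) exp(-1/x)\<close> on \<open>x > 0\<close>, extended by \<open>0\<close>, are closed under
  differentiation, which replaces \<open>P(u)\<close> by \<open>u\<^sup>2 (P(u) - P'(u))\<close>; hence they are smooth,
  although all their derivatives vanish at \<open>0\<close>.\<close>

definition flat_exp_poly :: "real poly \<Rightarrow> real \<Rightarrow> real" where
  "flat_exp_poly P x = (if 0 < x then poly P (inverse x) * exp (- inverse x) else 0)"

lemma tendsto_poly_mult_exp_neg_at_top: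
  fixes P :: "real poly"
  shows "((\<lambda>u. poly P u * exp (- u) * u) \<longlongrightarrow> 0) at_top"
proof -
  have "poly P u * exp (- u) * u = (\<Sum>i\<le>degree P. coeff P i * (u ^ Suc i / exp u))" for u :: real
    unfolding poly_altdef exp_minus
    by (simp add: sum_distrib_left sum_distrib_right divide_inverse mult_ac)
  moreover have "((\<lambda>u. \<Sum>i\<le>degree P. coeff P i * (u ^ Suc i / exp u)) \<longlongrightarrow>
      (\<Sum>i\<le>degree P. coeff P i * 0)) at_top"
    by (intro tendsto_sum tendsto_mult tendsto_const tendsto_power_div_exp_0)
  ultimately show ?thesis by simp
qed

lemma has_real_derivative_flat_exp_poly_0: "(flat_exp_poly P has_real_derivative 0) (at 0)"
  unfolding DERIV_def
proof (rule filterlim_split_at)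
  have "\<forall>\<^sub>F h in at_left 0. (flat_exp_poly P (0 + h) - flat_exp_poly P 0) / h = 0"
    by (auto simp: eventually_at_filter flat_exp_poly_def)
  then show "((\<lambda>h. (flat_exp_poly P (0 + h) - flat_exp_poly P 0) / h) \<longlongrightarrow> 0) (at_left 0)"
    by (rule tendsto_eventually)
next
  have "\<forall>\<^sub>F u in at_top. poly P u * exp (- u) * u =
      (flat_exp_poly P (0 + inverse u) - flat_exp_poly P 0) / inverse u"
    using eventually_gt_at_top[of 0]
    by eventually_elim (simp add: flat_exp_poly_def divide_inverse)
  then have "((\<lambda>u. (flat_exp_poly P (0 + inverse u) - flat_exp_poly P 0) / inverse u)
      \<longlongrightarrow> 0) at_top"
    by (rule Lim_transform_eventually[OF tendsto_poly_mult_exp_neg_at_top])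
  then show "((\<lambda>h. (flat_exp_poly P (0 + h) - flat_exp_poly P 0) / h) \<longlongrightarrow> 0) (at_right 0)"
    by (simp add: filterlim_at_right_to_top)
qed

lemma has_real_derivative_flat_exp_poly:
  "(flat_exp_poly P has_real_derivative flat_exp_poly ([:0, 0, 1:] * (P - pderiv P)) x) (at x)"
proof -
  consider "x > 0" | "x < 0" | "x = 0" by linarith
  then show ?thesis
  proof cases
    case 1
    have "((\<lambda>x. poly P (inverse x) * exp (- inverse x)) has_real_derivative
        poly (pderiv P) (inverse x) * (- (inverse x ^ 2)) * exp (- inverse x)
        + poly P (inverse x) * (exp (- inverse x) * (inverse x ^ 2))) (at x)"
      using 1 by (auto intro!: derivative_eq_intros DERIV_chain2[OF poly_DERIV]
          simp: power2_eq_square field_simps)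
    also have "poly (pderiv P) (inverse x) * (- (inverse x ^ 2)) * exp (- inverse x)
        + poly P (inverse x) * (exp (- inverse x) * (inverse x ^ 2))
        = flat_exp_poly ([:0, 0, 1:] * (P - pderiv P)) x"
      using 1 by (simp add: flat_exp_poly_def algebra_simps power2_eq_square)
    finally show ?thesis
      by (rule has_field_derivative_transform_within_open[where S = "{0<..}"])
        (use 1 in \<open>auto simp: flat_exp_poly_def\<close>)
  next
    case 2
    have "((\<lambda>x. 0) has_real_derivative flat_exp_poly ([:0, 0, 1:] * (P - pderiv P)) x) (at x)"
      using 2 by (simp add: flat_exp_poly_def)
    then show ?thesis
      by (rule has_field_derivative_transform_within_open[where S = "{..<0}"])
        (use 2 in \<open>auto simp: flat_exp_poly_def\<close>)
  next
    case 3
    then show ?thesis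
      using has_real_derivative_flat_exp_poly_0[of P] by (simp add: flat_exp_poly_def)
  qed
qed

lemma smooth_flat_exp_poly: "smooth (flat_exp_poly P)"
  by (coinduction arbitrary: P rule: smooth.coinduct)
    (use has_real_derivative_flat_exp_poly in blast)

lemma flat_exp_poly_1: "flat_exp_poly 1 x = (if 0 < x then exp (- inverse x) else 0)"
  by (simp add: flat_exp_poly_def)

lemma flat_exp_poly_1_mono: "x \<le> y \<Longrightarrow> flat_exp_poly 1 x \<le> flat_exp_poly 1 y"
  by (auto simp: flat_exp_poly_1 le_imp_inverse_le)

lemma flat_exp_poly_1_sum_pos: "0 < flat_exp_poly 1 x + flat_exp_poly 1 (1 - x)"
  by (cases "0 < x") (auto simp: flat_exp_poly_1 add_pos_nonneg)

definition smooth_step :: "real \<Rightarrow> real" where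
  "smooth_step u = flat_exp_poly 1 u / (flat_exp_poly 1 u + flat_exp_poly 1 (1 - u))"

lemma smooth_smooth_step: "smooth smooth_step"
proof -
  have "smooth (\<lambda>u. flat_exp_poly 1 u + flat_exp_poly 1 ((-1) * u + 1))"
    by (intro smooth_add smooth_compose[OF _ smooth_affine] smooth_flat_exp_poly)
  then have "smooth (\<lambda>u. inverse (flat_exp_poly 1 u + flat_exp_poly 1 (1 - u)))"
    by (intro smooth_inverse) (use flat_exp_poly_1_sum_pos in \<open>auto simp: less_imp_neq[symmetric]\<close>)
  then show ?thesis
    unfolding smooth_step_def[abs_def] divide_inverse by (intro smooth_mult smooth_flat_exp_poly)
qed

lemma smooth_step_eq_0: "u \<le> 0 \<Longrightarrow> smooth_step u = 0"
  by (simp add: smooth_step_def flat_exp_poly_1)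

lemma smooth_step_eq_1: "1 \<le> u \<Longrightarrow> smooth_step u = 1"
  using flat_exp_poly_1_sum_pos[of u] by (simp add: smooth_step_def flat_exp_poly_1)

lemma smooth_step_nonneg: "0 \<le> smooth_step u"
  by (simp add: smooth_step_def flat_exp_poly_1)

lemma smooth_step_le_1: "smooth_step u \<le> 1"
  using flat_exp_poly_1_sum_pos[of u] by (simp add: smooth_step_def flat_exp_poly_1)

lemma mono_smooth_step: "mono smooth_step"
proof
  fix u w :: real assume "u \<le> w"
  let ?h = "flat_exp_poly 1"
  have "?h u * ?h (1 - w) \<le> ?h w * ?h (1 - u)"
    using \<open>u \<le> w\<close> by (intro mult_mono flat_exp_poly_1_mono) (auto simp: flat_exp_poly_1)
  then show "smooth_step u \<le> smooth_step w"
    using flat_exp_poly_1_sum_pos[of u] flat_exp_poly_1_sum_pos[of w]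
    by (simp add: smooth_step_def divide_simps algebra_simps)
qed

lemma mono_has_real_derivative_nonneg:
  assumes "mono f" "(f has_real_derivative D) (at x)"
  shows "0 \<le> D"
proof (rule tendsto_lowerbound)
  show "((\<lambda>h. (f (x + h) - f x) / h) \<longlongrightarrow> D) (at_right 0)"
    using assms(2) unfolding DERIV_def by (rule filterlim_mono) (simp_all add: at_le)
  show "\<forall>\<^sub>F h in at_right 0. 0 \<le> (f (x + h) - f x) / h"
    using assms(1) by (auto simp: eventually_at_right_less mono_def eventually_at_filter)
qed simp

lemma deriv_smooth_step_nonneg: "0 \<le> deriv smooth_step u"
  by (rule mono_has_real_derivative_nonneg[OF mono_smooth_step
        smooth_has_real_derivative[OF smooth_smooth_step]])

lemma deriv_smooth_step_eq_0:
  assumes "u \<le> 0 \<or> 1 \<le> u"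
  shows "deriv smooth_step u = 0"
  using assms
proof
  assume "u \<le> 0"
  show ?thesis
    by (rule DERIV_local_min[OF smooth_has_real_derivative[OF smooth_smooth_step] zero_less_one])
      (use \<open>u \<le> 0\<close> in \<open>auto simp: smooth_step_eq_0 smooth_step_nonneg\<close>)
next
  assume "1 \<le> u"
  show ?thesis
    by (rule DERIV_local_max[OF smooth_has_real_derivative[OF smooth_smooth_step] zero_less_one])
      (use \<open>1 \<le> u\<close> in \<open>auto simp: smooth_step_eq_1 smooth_step_le_1\<close>)
qed

definition step_kernel :: "real \<Rightarrow> real \<Rightarrow> real \<Rightarrow> real" where
  "step_kernel z \<epsilon> t = deriv smooth_step ((t - z) / \<epsilon>) / \<epsilon>"

lemma has_real_derivative_smooth_step_scaled:
  assumes "0 < \<epsilon>"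
  shows "((\<lambda>t. smooth_step ((t - z) / \<epsilon>)) has_real_derivative step_kernel z \<epsilon> t) (at t)"
proof -
  have "((\<lambda>t. (t - z) / \<epsilon>) has_real_derivative 1 / \<epsilon>) (at t)"
    using assms by (auto intro!: derivative_eq_intros)
  from DERIV_chain2[OF smooth_has_real_derivative[OF smooth_smooth_step] this]
  show ?thesis by (simp add: step_kernel_def)
qed

lemma continuous_on_step_kernel: "continuous_on S (step_kernel z \<epsilon>)"
proof -
  have cont: "continuous_on UNIV (deriv smooth_step)"
    by (rule smooth_imp_continuous_on[OF smooth_deriv[OF smooth_smooth_step]])
  have "continuous_on S (\<lambda>t. deriv smooth_step ((t - z) * inverse \<epsilon>) * inverse \<epsilon>)"
    by (intro continuous_on_mult_right continuous_on_compose2[OF cont])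
      (auto intro!: continuous_intros)
  then show ?thesis by (simp add: step_kernel_def[abs_def] divide_inverse)
qed

lemma step_kernel_nonneg: "0 \<le> \<epsilon> \<Longrightarrow> 0 \<le> step_kernel z \<epsilon> t"
  by (simp add: step_kernel_def deriv_smooth_step_nonneg)

lemma step_kernel_eq_0:
  assumes "0 < \<epsilon>" "t \<notin> {z..z + \<epsilon>}"
  shows "step_kernel z \<epsilon> t = 0"
proof -
  have "(t - z) / \<epsilon> \<le> 0 \<or> 1 \<le> (t - z) / \<epsilon>"
    using assms by (auto simp: field_simps)
  then show ?thesis by (simp add: step_kernel_def deriv_smooth_step_eq_0)
qed

lemma set_integral_step_kernel:
  assumes "0 < \<epsilon>"
  shows "(LINT t:{z..z + \<epsilon>}|lborel. step_kernel z \<epsilon> t) = 1"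
proof -
  have "(LBINT t=z..z + \<epsilon>. step_kernel z \<epsilon> t)
      = smooth_step ((z + \<epsilon> - z) / \<epsilon>) - smooth_step ((z - z) / \<epsilon>)"
    by (rule interval_integral_FTC_finite[OF continuous_on_step_kernel])
      (auto intro!: has_field_derivative_at_within has_real_derivative_smooth_step_scaled assms
        simp: has_real_derivative_iff_has_vector_derivative[symmetric])
  also have "\<dots> = 1" using assms by (simp add: smooth_step_eq_0 smooth_step_eq_1)
  finally show ?thesis using assms by (simp add: interval_integral_Icc)
qed

lemma step_kernel_average:
  assumes "0 < \<epsilon>" and v: "continuous_on {z..z + \<epsilon>} v"
    and r: "\<And>t. t \<in> {z..z + \<epsilon>} \<Longrightarrow> \<bar>v t - c\<bar> \<le> r"
  shows "\<bar>(LINT t:{z..z + \<epsilon>}|lborel. v t * step_kernel z \<epsilon> t) - c\<bar> \<le> r"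
proof -
  let ?A = "{z..z + \<epsilon>}" and ?K = "step_kernel z \<epsilon>"
  have int: "set_integrable lborel ?A (\<lambda>t. f t * ?K t)" if "continuous_on ?A f" for f
    by (intro borel_integrable_atLeastAtMost' continuous_on_mult that continuous_on_step_kernel)
  have vc: "continuous_on ?A (\<lambda>t. v t - c)" by (intro continuous_on_diff v continuous_on_const)
  have K1: "(LINT t:?A|lborel. ?K t) = 1" by (rule set_integral_step_kernel[OF assms(1)])
  have absK: "\<bar>?K t\<bar> = ?K t" for t using step_kernel_nonneg assms(1) by simp
  have "(LINT t:?A|lborel. v t * ?K t) - c
      = (LINT t:?A|lborel. v t * ?K t) - (LINT t:?A|lborel. c * ?K t)"
    using K1 by simp
  also have "\<dots> = (LINT t:?A|lborel. (v t - c) * ?K t)"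
    unfolding left_diff_distrib by (rule set_integral_diff(2)[symmetric, OF int int]) (fact v, simp)
  finally have "\<bar>(LINT t:?A|lborel. v t * ?K t) - c\<bar> \<le> (LINT t:?A|lborel. \<bar>(v t - c) * ?K t\<bar>)"
    using set_integral_norm_bound[OF int[OF vc]] by simp
  also have "\<dots> = (LINT t:?A|lborel. \<bar>v t - c\<bar> * ?K t)"
    by (simp add: abs_mult absK)
  also have "\<dots> \<le> (LINT t:?A|lborel. r * ?K t)"
    using r step_kernel_nonneg[of \<epsilon>] assms(1)
    by (intro set_integral_mono int continuous_on_rabs vc continuous_on_const mult_right_mono) auto
  also have "\<dots> = r" using K1 by simp
  finally show ?thesis .
qed

text \<open>A smooth approximation of the indicator of \<open>[x, y]\<close>. Testing the weak derivative against
  it compares averages of \<open>v\<close> near \<open>x\<close> and near \<open>y\<close> with an integral of \<open>g\<close> over \<open>[x, y]\<close>.\<close>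

definition plateau :: "real \<Rightarrow> real \<Rightarrow> real \<Rightarrow> real \<Rightarrow> real" where
  "plateau x y \<epsilon> t = smooth_step ((t - x) / \<epsilon>) - smooth_step ((t - (y - \<epsilon>)) / \<epsilon>)"

lemma smooth_plateau: "smooth (plateau x y \<epsilon>)"
proof -
  have scaled: "smooth (\<lambda>t. smooth_step ((t - z) / \<epsilon>))" for z
    using smooth_compose[OF smooth_smooth_step smooth_affine[of "1 / \<epsilon>" "- z / \<epsilon>"]]
    by (simp add: diff_divide_distrib)
  show ?thesis
    unfolding plateau_def[abs_def] by (rule smooth_diff[OF scaled scaled])
qed

lemma has_real_derivative_plateau:
  "0 < \<epsilon> \<Longrightarrow>
    (plateau x y \<epsilon> has_real_derivative step_kernel x \<epsilon> t - step_kernel (y - \<epsilon>) \<epsilon> t) (at t)"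
  unfolding plateau_def[abs_def] by (intro DERIV_diff has_real_derivative_smooth_step_scaled)

lemma abs_plateau_le_1: "\<bar>plateau x y \<epsilon> t\<bar> \<le> 1"
  using smooth_step_nonneg[of "(t - x) / \<epsilon>"] smooth_step_le_1[of "(t - x) / \<epsilon>"]
    smooth_step_nonneg[of "(t - (y - \<epsilon>)) / \<epsilon>"] smooth_step_le_1[of "(t - (y - \<epsilon>)) / \<epsilon>"]
  by (simp add: plateau_def abs_le_iff)

lemma plateau_eq_0:
  assumes "0 < \<epsilon>" "\<epsilon> \<le> y - x" "t \<notin> {x..y}"
  shows "plateau x y \<epsilon> t = 0"
proof (cases "t < x")
  case True
  then have "(t - x) / \<epsilon> \<le> 0" "(t - (y - \<epsilon>)) / \<epsilon> \<le> 0"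
    using assms by (auto simp: divide_nonpos_pos)
  then show ?thesis by (simp add: plateau_def smooth_step_eq_0)
next
  case False
  then have "1 \<le> (t - x) / \<epsilon>" "1 \<le> (t - (y - \<epsilon>)) / \<epsilon>"
    using assms by (auto simp: field_simps)
  then show ?thesis by (simp add: plateau_def smooth_step_eq_1)
qed

lemma test_fun_plateau:
  assumes "a < x" "y < b" "0 < \<epsilon>" "\<epsilon> \<le> y - x"
  shows "test_fun a b (plateau x y \<epsilon>)"
proof -
  have "\<forall>k t. ((deriv ^^ k) (plateau x y \<epsilon>)) differentiable (at t)"
    using smooth_imp_differentiable[OF smooth_higher_deriv[OF smooth_plateau]] by blast
  moreover have "\<forall>t. t \<notin> {x..y} \<longrightarrow> plateau x y \<epsilon> t = 0"
    using plateau_eq_0[OF assms(3,4)] by blast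
  ultimately show ?thesis
    unfolding test_fun_def using assms(1,2) by blast
qed

section \<open>Functions with a weak derivative\<close>

lemma H1_weak_deriv_set_integrable:
  assumes "H1_weak_deriv a b v g"
  shows "set_integrable lborel {a..b} g" and "set_integrable lborel {a..b} (\<lambda>x. (g x)\<^sup>2)"
proof -
  have Icc_Ioo: "set_integrable lborel {a..b} f \<longleftrightarrow> set_integrable lborel {a<..<b} f"
    for f :: "real \<Rightarrow> real"
    by (rule set_integrable_discrete_difference[where X = "{a, b}"]) auto
  from assms have meas: "set_borel_measurable lborel {a<..<b} g"
    and sq: "set_integrable lborel {a<..<b} (\<lambda>x. (g x)\<^sup>2)"
    by (simp_all add: H1_weak_deriv_def L2_on_def)
  have fin: "emeasure lborel {a<..<b} < \<infinity>"
    using emeasure_lborel_box_finite[of a b] by (simp add: box_real)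
  show "set_integrable lborel {a..b} g"
    unfolding Icc_Ioo by (rule square_integrable_imp_set_integrable[OF _ fin meas sq]) simp
  show "set_integrable lborel {a..b} (\<lambda>x. (g x)\<^sup>2)"
    unfolding Icc_Ioo by (fact sq)
qed

lemma H1_weak_deriv_plateau:
  assumes H: "H1_weak_deriv a b v g" and v: "continuous_on {a..b} v"
    and "a < x" "y < b" "0 < \<epsilon>" "\<epsilon> \<le> y - x"
  shows "(LINT t:{x..x + \<epsilon>}|lborel. v t * step_kernel x \<epsilon> t)
      - (LINT t:{y - \<epsilon>..y}|lborel. v t * step_kernel (y - \<epsilon>) \<epsilon> t)
      = - (LINT t:{x..y}|lborel. g t * plateau x y \<epsilon> t)"
proof -
  let ?K1 = "\<lambda>t. v t * step_kernel x \<epsilon> t" and ?K2 = "\<lambda>t. v t * step_kernel (y - \<epsilon>) \<epsilon> t"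
  have sub1: "{x..x + \<epsilon>} \<subseteq> {a<..<b}" and sub2: "{y - \<epsilon>..y} \<subseteq> {a<..<b}"
    and sub: "{x..y} \<subseteq> {a<..<b}" using assms by auto
  have van1: "?K1 t = 0" if "t \<in> {a<..<b} - {x..x + \<epsilon>}" for t
    using that step_kernel_eq_0[OF assms(5)] by simp
  have van2: "?K2 t = 0" if "t \<in> {a<..<b} - {y - \<epsilon>..y}" for t
    using that step_kernel_eq_0[OF assms(5), of t "y - \<epsilon>"] by simp
  have "set_integrable lborel {x..x + \<epsilon>} ?K1" "set_integrable lborel {y - \<epsilon>..y} ?K2"
    using sub1 sub2 assms by (intro borel_integrable_atLeastAtMost' continuous_on_mult
        continuous_on_step_kernel continuous_on_subset[OF v]; auto)+
  then have int1: "set_integrable lborel {a<..<b} ?K1"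
    and int2: "set_integrable lborel {a<..<b} ?K2"
    using set_integral_vanishing_outside(1)[OF sub1 van1]
      set_integral_vanishing_outside(1)[OF sub2 van2]
    by simp_all
  have "(LINT t:{a<..<b}|lborel. g t * plateau x y \<epsilon> t)
      = (LINT t:{x..y}|lborel. g t * plateau x y \<epsilon> t)"
    by (rule set_integral_vanishing_outside(2)[OF sub]) (simp add: plateau_eq_0[OF assms(5,6)])
  with H test_fun_plateau[OF assms(3-6)]
  have weak: "(LINT t:{a<..<b}|lborel. v t * deriv (plateau x y \<epsilon>) t)
      = - (LINT t:{x..y}|lborel. g t * plateau x y \<epsilon> t)"
    by (simp add: H1_weak_deriv_def)
  have "(LINT t:{a<..<b}|lborel. v t * deriv (plateau x y \<epsilon>) t)
      = (LINT t:{a<..<b}|lborel. ?K1 t - ?K2 t)"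
    using DERIV_imp_deriv[OF has_real_derivative_plateau[OF assms(5)]]
    by (simp add: right_diff_distrib)
  also have "\<dots> = (LINT t:{a<..<b}|lborel. ?K1 t) - (LINT t:{a<..<b}|lborel. ?K2 t)"
    by (rule set_integral_diff(2)[OF int1 int2])
  also have "\<dots> = (LINT t:{x..x + \<epsilon>}|lborel. ?K1 t) - (LINT t:{y - \<epsilon>..y}|lborel. ?K2 t)"
    using set_integral_vanishing_outside(2)[OF sub1 van1]
      set_integral_vanishing_outside(2)[OF sub2 van2]
    by simp
  finally show ?thesis using weak by simp
qed

lemma H1_weak_deriv_plateau_le:
  assumes H: "H1_weak_deriv a b v g" and v: "continuous_on {a..b} v"
    and "a < x" "y < b" "0 < \<epsilon>" "\<epsilon> \<le> y - x"
  shows "\<bar>(LINT t:{x..x + \<epsilon>}|lborel. v t * step_kernel x \<epsilon> t)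
      - (LINT t:{y - \<epsilon>..y}|lborel. v t * step_kernel (y - \<epsilon>) \<epsilon> t)\<bar>
      \<le> (LINT t:{x..y}|lborel. \<bar>g t\<bar>)"
proof -
  have g: "set_integrable lborel {x..y} g"
    by (rule set_integrable_subset[OF H1_weak_deriv_set_integrable(1)[OF H]]) (use assms in auto)
  have "\<bar>LINT t:{x..y}|lborel. g t * plateau x y \<epsilon> t\<bar> \<le> (LINT t:{x..y}|lborel. \<bar>g t\<bar>)"
    using borel_measurable_continuous_onI[OF smooth_imp_continuous_on[OF smooth_plateau]]
    by (intro abs_set_integral_mult_le g abs_plateau_le_1) simp
  then show ?thesis using H1_weak_deriv_plateau[OF assms] by simp
qed

lemma H1_weak_deriv_variation:
  assumes H: "H1_weak_deriv a b v g" and v: "continuous_on {a..b} v"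
    and "a \<le> p" "p < q" "q \<le> b"
  shows "\<bar>v q - v p\<bar> \<le> (LINT t:{p<..<q}|lborel. \<bar>g t\<bar>)"
proof (rule field_le_epsilon)
  fix e :: real assume "0 < e"
  obtain \<delta> where "0 < \<delta>" and \<delta>: "\<And>s t. s \<in> {a..b} \<Longrightarrow> t \<in> {a..b} \<Longrightarrow> \<bar>s - t\<bar> < \<delta> \<Longrightarrow>
      \<bar>v s - v t\<bar> \<le> e / 2"
    using compact_uniformly_continuous[OF v compact_Icc] \<open>0 < e\<close>
    unfolding uniformly_continuous_on_def dist_real_def
    by (metis half_gt_zero less_eq_real_def)
  define d where "d = min (\<delta> / 3) ((q - p) / 3)"
  define x y where "x = p + d" and "y = q - d"
  have d: "0 < d" "3 * d \<le> \<delta>" "3 * d \<le> q - p"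
    using \<open>0 < \<delta>\<close> assms(4) by (auto simp: d_def min_def)
  have near: "\<bar>v t - v s\<bar> \<le> e / 2" if "s \<in> {p, q}" "t \<in> {a..b}" "\<bar>t - s\<bar> \<le> 2 * d" for s t
    using \<delta>[of t s] that d assms(3-5) by auto
  have avg_p: "\<bar>(LINT t:{x..x + d}|lborel. v t * step_kernel x d t) - v p\<bar> \<le> e / 2"
    using assms(3-5) d
    by (intro step_kernel_average continuous_on_subset[OF v] near) (auto simp: x_def)
  have avg_q: "\<bar>(LINT t:{y - d..y}|lborel. v t * step_kernel (y - d) d t) - v q\<bar> \<le> e / 2"
  proof -
    have "\<bar>(LINT t:{y - d..y - d + d}|lborel. v t * step_kernel (y - d) d t) - v q\<bar> \<le> e / 2"
      using assms(3-5) d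
      by (intro step_kernel_average continuous_on_subset[OF v] near) (auto simp: y_def)
    then show ?thesis by simp
  qed
  have g_pq: "set_integrable lborel {p<..<q} g"
    by (rule set_integrable_subset[OF H1_weak_deriv_set_integrable(1)[OF H]]) (use assms in auto)
  have "\<bar>(LINT t:{x..x + d}|lborel. v t * step_kernel x d t)
      - (LINT t:{y - d..y}|lborel. v t * step_kernel (y - d) d t)\<bar>
      \<le> (LINT t:{x..y}|lborel. \<bar>g t\<bar>)"
    by (rule H1_weak_deriv_plateau_le[OF H v]) (use assms d in \<open>auto simp: x_def y_def\<close>)
  also have "\<dots> \<le> (LINT t:{p<..<q}|lborel. \<bar>g t\<bar>)"
    using d by (intro set_integral_mono_set set_integrable_abs g_pq) (auto simp: x_def y_def)
  finally show "\<bar>v q - v p\<bar> \<le> (LINT t:{p<..<q}|lborel. \<bar>g t\<bar>) + e"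
    using avg_p avg_q unfolding abs_le_iff by linarith
qed

section \<open>The estimate on the band between minimum and maximum\<close>

lemma compact_level_set:
  fixes v :: "real \<Rightarrow> real"
  assumes "continuous_on {c..d} v"
  shows "compact {t \<in> {c..d}. v t = y}"
proof -
  have "closed {t \<in> {c..d}. v t = y}"
    by (rule continuous_closed_preimage_constant[OF assms closed_atLeastAtMost])
  moreover have "bounded {t \<in> {c..d}. v t = y}"
    by (rule bounded_subset[OF bounded_closed_interval]) auto
  ultimately show ?thesis by (simp add: compact_eq_bounded_closed)
qed

text \<open>Between the last visit of the level \<open>lo\<close> and the first subsequent visit of \<open>hi\<close> (or \<open>d\<close>),
  \<open>v\<close> stays strictly between the two levels.\<close>

lemma interval_between_levels:
  fixes v :: "real \<Rightarrow> real"
  assumes v: "continuous_on {c..d} v" and "c \<le> d" "v c = lo" "lo < v d"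
    and bounds: "\<And>t. t \<in> {c..d} \<Longrightarrow> lo \<le> v t \<and> v t \<le> hi"
  obtains p q where "c \<le> p" "p < q" "q \<le> d"
    and "\<And>t. t \<in> {p<..<q} \<Longrightarrow> lo < v t \<and> v t < hi" and "v d - lo \<le> v q - v p"
proof -
  let ?Q = "{t \<in> {c..d}. v t = hi} \<union> {d}"
  have "compact ?Q" by (intro compact_Un compact_level_set[OF v] compact_sing)
  then obtain q where "q \<in> ?Q" and q_min: "\<And>t. t \<in> ?Q \<Longrightarrow> q \<le> t"
    using compact_attains_inf[of ?Q] by blast
  then have q: "c \<le> q" "q \<le> d" "v d \<le> v q"
    using \<open>c \<le> d\<close> bounds[of d] by auto
  have below_hi: "v t < hi" if "c \<le> t" "t < q" for t
    using bounds[of t] q_min[of t] that q by fastforce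
  let ?P = "{t \<in> {c..q}. v t = lo}"
  have "compact ?P" by (rule compact_level_set[OF continuous_on_subset[OF v]]) (use q in auto)
  moreover have "c \<in> ?P" using q \<open>v c = lo\<close> by auto
  ultimately obtain p where "p \<in> ?P" and p_max: "\<And>t. t \<in> ?P \<Longrightarrow> t \<le> p"
    using compact_attains_sup[of ?P] by blast
  then have p: "c \<le> p" "p \<le> q" "v p = lo" by auto
  show ?thesis
  proof
    show "p < q" using p q \<open>lo < v d\<close> by (metis order.not_eq_order_implies_strict not_less)
    show "lo < v t \<and> v t < hi" if "t \<in> {p<..<q}" for t
      using that p q bounds[of t] p_max[of t] below_hi[of t] by fastforce
  qed (use p q in auto)
qed

lemma interval_between_levels_left:
  fixes v :: "real \<Rightarrow> real"
  assumes v: "continuous_on {d..c} v" and "d \<le> c" "v c = lo" "lo < v d"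
    and bounds: "\<And>t. t \<in> {d..c} \<Longrightarrow> lo \<le> v t \<and> v t \<le> hi"
  obtains p q where "d \<le> p" "p < q" "q \<le> c"
    and "\<And>t. t \<in> {p<..<q} \<Longrightarrow> lo < v t \<and> v t < hi" and "v d - lo \<le> v p - v q"
proof -
  have "continuous_on {- c..- d} (\<lambda>t. v (- t))"
    by (rule continuous_on_compose2[OF v]) (auto intro!: continuous_intros)
  then obtain p q where "- c \<le> p" "p < q" "q \<le> - d"
    and between: "\<And>t. t \<in> {p<..<q} \<Longrightarrow> lo < v (- t) \<and> v (- t) < hi"
    and "v d - lo \<le> v (- q) - v (- p)"
    by (rule interval_between_levels[of "- c" "- d" "\<lambda>t. v (- t)" lo hi]) (use assms in auto)
  moreover have "lo < v t \<and> v t < hi" if "t \<in> {- q<..<- p}" for t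
    using between[of "- t"] that by auto
  ultimately show ?thesis using that[of "- q" "- p"] by auto
qed

lemma sets_lborel_level_band:
  fixes v :: "real \<Rightarrow> real"
  assumes "continuous_on {a..b} v"
  shows "{t \<in> {a..b}. lo < v t \<and> v t < hi} \<in> sets lborel"
proof -
  define w where "w t = indicator {a..b} t *\<^sub>R v t" for t
  have "w \<in> borel_measurable borel"
    unfolding w_def[abs_def] by (rule borel_measurable_continuous_on_indicator) (auto intro: assms)
  then have "{a..b} \<inter> (w -` {lo<..} \<inter> space borel) \<inter> (w -` {..<hi} \<inter> space borel) \<in> sets borel"
    by (intro sets.Int measurable_sets) auto
  also have "{a..b} \<inter> (w -` {lo<..} \<inter> space borel) \<inter> (w -` {..<hi} \<inter> space borel)
      = {t \<in> {a..b}. lo < v t \<and> v t < hi}"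
    by (auto simp: w_def)
  finally show ?thesis by simp
qed

lemma H1_weak_deriv_above_min_le:
  assumes H: "H1_weak_deriv a b v g" and v: "continuous_on {a..b} v"
    and "m \<in> {a..b}" "s \<in> {a..b}" "v m < v s"
    and bounds: "\<And>t. t \<in> {a..b} \<Longrightarrow> v m \<le> v t \<and> v t \<le> hi"
  shows "v s - v m \<le> (LINT t:{t \<in> {a..b}. v m < v t \<and> v t < hi}|lborel. \<bar>g t\<bar>)"
proof -
  define I where "I = {t \<in> {a..b}. v m < v t \<and> v t < hi}"
  have I: "I \<in> sets lborel" "I \<subseteq> {a..b}"
    using sets_lborel_level_band[OF v] by (auto simp: I_def)
  have gI: "set_integrable lborel I (\<lambda>t. \<bar>g t\<bar>)"
    using set_integrable_abs[OF H1_weak_deriv_set_integrable(1)[OF H]] I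
    by (rule set_integrable_subset)
  have gap: "\<bar>v q - v p\<bar> \<le> (LINT t:I|lborel. \<bar>g t\<bar>)"
    if "a \<le> p" "p < q" "q \<le> b" "\<And>t. t \<in> {p<..<q} \<Longrightarrow> v m < v t \<and> v t < hi" for p q
  proof -
    have "\<bar>v q - v p\<bar> \<le> (LINT t:{p<..<q}|lborel. \<bar>g t\<bar>)"
      by (rule H1_weak_deriv_variation[OF H v that(1-3)])
    also have "\<dots> \<le> (LINT t:I|lborel. \<bar>g t\<bar>)"
      by (rule set_integral_mono_set[OF gI]) (use that in \<open>auto simp: I_def\<close>)
    finally show ?thesis .
  qed
  have "m \<noteq> s" using assms(5) by auto
  then consider "m < s" | "s < m" by linarith
  then have "v s - v m \<le> (LINT t:I|lborel. \<bar>g t\<bar>)"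
  proof cases
    case 1
    obtain p q where "m \<le> p" "p < q" "q \<le> s"
      and "\<And>t. t \<in> {p<..<q} \<Longrightarrow> v m < v t \<and> v t < hi" and "v s - v m \<le> v q - v p"
      by (rule interval_between_levels[of m s v "v m" hi])
        (use 1 assms in \<open>auto intro: continuous_on_subset[OF v]\<close>)
    with gap[of p q] assms(3,4) show ?thesis by force
  next
    case 2
    obtain p q where "s \<le> p" "p < q" "q \<le> m"
      and "\<And>t. t \<in> {p<..<q} \<Longrightarrow> v m < v t \<and> v t < hi" and "v s - v m \<le> v p - v q"
      by (rule interval_between_levels_left[of s m v "v m" hi])
        (use 2 assms in \<open>auto intro: continuous_on_subset[OF v]\<close>)
    with gap[of p q] assms(3,4) show ?thesis by force
  qed
  then show ?thesis by (simp only: I_def)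
qed

lemma H1_weak_deriv_band_estimate:
  assumes H: "H1_weak_deriv a b v g" and v: "continuous_on {a..b} v"
    and m: "m \<in> {a..b}" and bounds: "\<And>t. t \<in> {a..b} \<Longrightarrow> v m \<le> v t \<and> v t \<le> hi"
    and I: "I = {t \<in> {a..b}. v m < v t \<and> v t < hi}"
  shows "(LINT s:I|lborel. (v s - v m)\<^sup>2) \<le> (measure lborel I)\<^sup>2 * (LINT s:I|lborel. (g s)\<^sup>2)"
proof -
  have "I \<subseteq> {a..b}" by (auto simp: I)
  then have "emeasure lborel I \<le> emeasure lborel {a..b}" by (rule emeasure_mono) simp
  then have I_sets: "I \<in> sets lborel" and I_fin: "emeasure lborel I < \<infinity>"
    using sets_lborel_level_band[OF v]
    by (auto simp: I emeasure_lborel_Icc_eq intro: order.strict_trans1)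
  define K where "K = (LINT s:I|lborel. \<bar>g s\<bar>)"
  have osc: "0 \<le> v s - v m \<and> v s - v m \<le> K" if "s \<in> I" for s
    using H1_weak_deriv_above_min_le[OF H v m, of s hi] bounds that by (auto simp: I K_def)
  have "(LINT s:I|lborel. (v s - v m)\<^sup>2) \<le> (LINT s:I|lborel. K\<^sup>2)"
  proof (rule set_integral_mono)
    show "set_integrable lborel I (\<lambda>s. (v s - v m)\<^sup>2)"
      by (rule set_integrable_subset[OF borel_integrable_atLeastAtMost' I_sets])
        (auto intro!: continuous_intros v simp: I)
    show "set_integrable lborel I (\<lambda>s. K\<^sup>2)"
      using I_sets I_fin by (simp add: set_integrable_def)
  qed (use osc in \<open>auto intro: power_mono\<close>)
  also have "\<dots> = measure lborel I * K\<^sup>2"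
    using I_sets I_fin by (simp add: set_integral_const top.not_eq_extremum)
  also have "\<dots> \<le> measure lborel I * (measure lborel I * (LINT s:I|lborel. (g s)\<^sup>2))"
    unfolding K_def
    by (intro mult_left_mono Cauchy_Schwarz_set_integral I_sets I_fin measure_nonneg
        set_integrable_subset[OF H1_weak_deriv_set_integrable(1)[OF H]]
        set_integrable_subset[OF H1_weak_deriv_set_integrable(2)[OF H]])
      (auto simp: I)
  finally show ?thesis by (simp add: power2_eq_square mult.assoc)
qed

theorem lemma2p1:
  fixes a b :: real and v g :: "real \<Rightarrow> real"
  assumes "a < b"
    and "H1_weak_deriv a b v g"
    and "continuous_on {a..b} v"
  defines "v0 \<equiv> Inf (v ` {a..b})"
    and "v1 \<equiv> Sup (v ` {a..b})"
    and "I \<equiv> {s \<in> {a..b}. Inf (v ` {a..b}) < v s \<and> v s < Sup (v ` {a..b})}"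
  shows "(LINT s:I|lborel. (v s - v0)\<^sup>2) \<le> (measure lborel I)\<^sup>2 * (LINT s:I|lborel. (g s)\<^sup>2)"
proof -
  obtain m where m: "m \<in> {a..b}" "\<And>t. t \<in> {a..b} \<Longrightarrow> v m \<le> v t"
    using continuous_attains_inf[OF compact_Icc _ assms(3)] assms(1) by auto
  have v0: "v0 = v m"
    unfolding v0_def by (rule cInf_eq_minimum) (use m in auto)
  have "bdd_above (v ` {a..b})"
    by (intro bounded_imp_bdd_above compact_imp_bounded compact_continuous_image assms(3)
        compact_Icc)
  then have bounds: "v m \<le> v t \<and> v t \<le> v1" if "t \<in> {a..b}" for t
    using m(2)[OF that] cSup_upper[of "v t"] that by (auto simp: v1_def)
  have "I = {t \<in> {a..b}. v m < v t \<and> v t < v1}"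
    unfolding I_def v0[unfolded v0_def] v1_def ..
  from H1_weak_deriv_band_estimate[OF assms(2,3) m(1) bounds this]
  show ?thesis by (simp only: v0)
qed

end
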